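(* Let $\phi_{car}(z)=1+z+z^2/2$ and $\Omega_{car}=\phi_{car}(\mathbb{D})$, where $\mathbb{D}=\{z\in\mathbb{C}:|z|<1\}$. For $1/2<a<5/2$, let \[r_a=\begin{cases}(2a-1)/2, & 1/2<a\le 3/2,\\ (5-2a)/2, & 3/2\le a<5/2,\end{cases}\qquad R_a=\begin{cases}(5-2a)/2, & 1/2<a\le 7/6,\\ \sqrt{(2a-1)^3/(8(a-1))}, & 7/6\le a<5/2.\end{cases}\] Then \[\{w:|w-a|<r_a\}\subseteq\Omega_{car}\subseteq\{w:|w-a|<R_a\}.\] *)

theory Defs
  imports "HOL-Analysis.Analysis"
begin

definition phi_car :: "complex \<Rightarrow> complex" where
  "phi_car z = 1 + z + z^2 / 2"

definition Omega_car :: "complex set" where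
  "Omega_car = phi_car ` ball 0 1"

definition r_a :: "real \<Rightarrow> real" where
  "r_a a = (if a \<le> 3/2 then (2*a - 1)/2 else (5 - 2*a)/2)"

definition R_a :: "real \<Rightarrow> real" where
  "R_a a = (if a \<le> 7/6 then (5 - 2*a)/2 else sqrt ((2*a - 1)^3 / (8*(a - 1))))"

end

theory Submission
  imports Defs
begin

(* Substituting u = z + 1 gives phi_car z = (u^2 + 1)/2, so Omega_car is the image of the disc
   |u - 1| < 1, and |phi_car z - a| = |u^2 - c|/2 with c = 2a - 1. With t = |u|^2,
     |u^2 - c|^2 = (1 - c) t^2 + 2 c t + c^2 + c (t^2 - (2 Re u)^2),
   and |u - 1| < 1 iff t < 2 Re u. So inside the disc |u^2 - c|^2 lies below the quadratic
   (1 - c) t^2 + 2 c t + c^2 on 0 <= t < 4, whose maximum is (2 R_a)^2. Conversely every w has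
   a square root u = csqrt (2w - 1) with Re u >= 0, and if u were outside the disc the same
   quadratic (or, for |u| > 2, the triangle inequality) would bound |u^2 - c| below by
   min c (4 - c) = 2 r_a. *)

(* |u^2 - c|^2 for u on the circle |u - 1| = 1 with |u|^2 = t *)
definition car_profile :: "real \<Rightarrow> real \<Rightarrow> real" where
  "car_profile c t = (1 - c) * t^2 + 2 * c * t + c^2"

(* The maximum of car_profile c on [0, 4]: attained at t = 4 if c <= 4/3, else at the vertex
   t = c / (c - 1). *)
definition car_profile_max :: "real \<Rightarrow> real" where
  "car_profile_max c = (if c \<le> 4/3 then (4 - c)^2 else c^3 / (c - 1))"

lemma affine_nonneg_on_interval:
  fixes p q t T :: real
  assumes "0 \<le> p" "0 \<le> p + q * T" "0 \<le> t" "t \<le> T"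
  shows "0 \<le> p + q * t"
proof (cases "0 \<le> q")
  case False
  then have "q * T \<le> q * t" using assms(4) by (simp add: mult_left_mono_neg)
  then show ?thesis using assms(2) by linarith
qed (use assms in simp)

lemma car_profile_le_endpoint:
  assumes "c \<le> 4/3" "0 \<le> t" "t \<le> 4"
  shows "car_profile c t \<le> (4 - c)^2"
proof -
  have "0 \<le> (4 - 2*c) + (1 - c) * t"
    by (rule affine_nonneg_on_interval[where T = 4]) (use assms in auto)
  then have "0 \<le> (4 - t) * ((4 - 2*c) + (1 - c) * t)" using assms(3) by simp
  moreover have "(4 - c)^2 - car_profile c t = (4 - t) * ((4 - 2*c) + (1 - c) * t)"
    unfolding car_profile_def by algebra
  ultimately show ?thesis by linarith
qed

lemma car_profile_le_vertex:
  assumes "1 < c"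
  shows "car_profile c t \<le> c^3 / (c - 1)"
proof -
  have "c^3 - car_profile c t * (c - 1) = ((c - 1) * t - c)^2"
    unfolding car_profile_def by algebra
  then have "car_profile c t * (c - 1) \<le> c^3" by (metis diff_ge_0_iff_ge zero_le_power2)
  then show ?thesis using assms by (simp add: le_divide_eq)
qed

lemma car_profile_ge_start:
  assumes "0 \<le> c" "c \<le> 2" "0 \<le> t" "t \<le> 4"
  shows "c^2 \<le> car_profile c t"
proof -
  have "0 \<le> 2*c + (1 - c) * t"
    by (rule affine_nonneg_on_interval[where T = 4]) (use assms in auto)
  then have "0 \<le> t * (2*c + (1 - c) * t)" using assms(3) by simp
  moreover have "car_profile c t - c^2 = t * (2*c + (1 - c) * t)"
    unfolding car_profile_def by algebra
  ultimately show ?thesis by linarith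
qed

lemma car_profile_ge_endpoint:
  assumes "2 \<le> c" "0 \<le> t" "t \<le> 4"
  shows "(4 - c)^2 \<le> car_profile c t"
proof -
  have "0 \<le> (2*c - 4) + (c - 1) * t"
    by (rule affine_nonneg_on_interval[where T = 4]) (use assms in auto)
  then have "0 \<le> (4 - t) * ((2*c - 4) + (c - 1) * t)" using assms(3) by simp
  moreover have "car_profile c t - (4 - c)^2 = (4 - t) * ((2*c - 4) + (c - 1) * t)"
    unfolding car_profile_def by algebra
  ultimately show ?thesis by linarith
qed

lemma norm_power2_minus_of_real:
  "(cmod (u^2 - complex_of_real c))^2 =
     car_profile c ((cmod u)^2) + c * (((cmod u)^2)^2 - (2 * Re u)^2)"
  unfolding car_profile_def cmod_power2 by (simp add: power2_eq_square algebra_simps)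

lemma mem_ball_1_1_iff: "u \<in> ball 1 1 \<longleftrightarrow> (cmod u)^2 < 2 * Re u"
proof -
  have "(cmod (1 - u))^2 = (cmod u)^2 - 2 * Re u + 1"
    unfolding cmod_power2 by (simp add: power2_eq_square algebra_simps)
  moreover have "cmod (1 - u) < 1 \<longleftrightarrow> (cmod (1 - u))^2 < 1"
    by (simp add: abs_square_less_1)
  ultimately show ?thesis by (simp add: dist_norm)
qed

lemma norm_power2_minus_of_real_less:
  assumes "u \<in> ball 1 1" "0 < c"
  shows "(cmod (u^2 - complex_of_real c))^2 < car_profile_max c"
proof -
  define t where "t = (cmod u)^2"
  have "t < 2 * Re u" using assms(1) unfolding t_def mem_ball_1_1_iff .
  then have "t^2 < (2 * Re u)^2" by (intro power_strict_mono) (auto simp: t_def)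
  then have "(cmod (u^2 - complex_of_real c))^2 < car_profile c t"
    using assms(2) unfolding norm_power2_minus_of_real t_def by (simp add: mult_less_0_iff)
  moreover have "cmod u < 2"
    using assms(1) norm_triangle_ineq2[of u 1] by (simp add: dist_norm norm_minus_commute)
  then have "t \<le> 2^2" unfolding t_def by (intro power_mono) auto
  ultimately show ?thesis
    using car_profile_le_endpoint[of c t] car_profile_le_vertex[of c t]
    unfolding car_profile_max_def by (auto simp: t_def)
qed

lemma norm_power2_minus_of_real_ge:
  assumes "u \<notin> ball 1 1" "0 \<le> Re u" "0 < c" "c < 4"
  shows "min c (4 - c) \<le> cmod (u^2 - complex_of_real c)"
proof (cases "(cmod u)^2 \<le> 4")
  case True
  define t where "t = (cmod u)^2"
  have "2 * Re u \<le> t" using assms(1) unfolding t_def mem_ball_1_1_iff by simp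
  then have "(2 * Re u)^2 \<le> t^2" using assms(2) by (intro power_mono) auto
  then have "car_profile c t \<le> (cmod (u^2 - complex_of_real c))^2"
    using assms(3) unfolding norm_power2_minus_of_real t_def by simp
  moreover have "(min c (4 - c))^2 \<le> car_profile c t"
    using True car_profile_ge_start[of c t] car_profile_ge_endpoint[of c t] assms(3,4)
    by (cases "c \<le> 2") (auto simp: t_def)
  ultimately have "(min c (4 - c))^2 \<le> (cmod (u^2 - complex_of_real c))^2" by linarith
  then show ?thesis by (rule power2_le_imp_le) simp
next
  case False
  have "4 - c \<le> cmod (u^2) - cmod (complex_of_real c)"
    using False assms(3) by (simp add: norm_power)
  also have "\<dots> \<le> cmod (u^2 - complex_of_real c)" by (rule norm_triangle_ineq2)
  finally show ?thesis by linarith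
qed

lemma phi_car_eq: "phi_car z = ((z + 1)^2 + 1) / 2"
  unfolding phi_car_def by (simp add: power2_eq_square field_simps)

lemma Omega_car_eq: "Omega_car = (\<lambda>u. (u^2 + 1) / 2) ` ball 1 1"
proof -
  have shift: "(\<lambda>z. z + 1) ` ball 0 1 = ball (1::complex) 1"
    using image_add_ball[of 1 0 1] by (simp add: add.commute)
  show ?thesis
    unfolding Omega_car_def by (simp add: image_image phi_car_eq flip: shift)
qed

lemma norm_half_power2_plus_one_minus:
  "cmod ((u^2 + 1) / 2 - complex_of_real ((1 + c) / 2)) = cmod (u^2 - complex_of_real c) / 2"
proof -
  have "(u^2 + 1) / 2 - complex_of_real ((1 + c) / 2) = (u^2 - complex_of_real c) / 2"
    by (simp add: field_simps)
  then show ?thesis by (simp only: norm_divide) simp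
qed

lemma ball_subset_Omega_car:
  assumes "0 < c" "c < 4"
  shows "ball (complex_of_real ((1 + c) / 2)) (min c (4 - c) / 2) \<subseteq> Omega_car"
proof
  fix w assume "w \<in> ball (complex_of_real ((1 + c) / 2)) (min c (4 - c) / 2)"
  then have w_near: "cmod (w - complex_of_real ((1 + c) / 2)) < min c (4 - c) / 2"
    by (simp add: dist_norm norm_minus_commute)
  define u where "u = csqrt (2 * w - 1)"
  have w_eq: "w = (u^2 + 1) / 2" unfolding u_def by simp
  have "u \<in> ball 1 1"
  proof (rule ccontr)
    assume "u \<notin> ball 1 1"
    moreover have "0 \<le> Re u" unfolding u_def by (rule Re_csqrt)
    ultimately have "min c (4 - c) \<le> cmod (u^2 - complex_of_real c)"
      using assms by (rule norm_power2_minus_of_real_ge)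
    moreover have "cmod (u^2 - complex_of_real c) < min c (4 - c)"
      using w_near by (simp only: w_eq norm_half_power2_plus_one_minus) simp
    ultimately show False by linarith
  qed
  then show "w \<in> Omega_car" unfolding Omega_car_eq w_eq by blast
qed

lemma Omega_car_subset_ball:
  assumes "0 < c"
  shows "Omega_car \<subseteq> ball (complex_of_real ((1 + c) / 2)) (sqrt (car_profile_max c) / 2)"
proof
  fix w assume "w \<in> Omega_car"
  then obtain u where u: "u \<in> ball 1 1" and w_eq: "w = (u^2 + 1) / 2"
    unfolding Omega_car_eq by blast
  have "cmod (u^2 - complex_of_real c) < sqrt (car_profile_max c)"
    using norm_power2_minus_of_real_less[OF u assms] by (simp add: real_less_rsqrt)
  then show "w \<in> ball (complex_of_real ((1 + c) / 2)) (sqrt (car_profile_max c) / 2)"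
    using norm_half_power2_plus_one_minus[of u c]
    by (simp add: w_eq dist_norm norm_minus_commute)
qed

theorem lemma2p2:
  fixes a :: real
  assumes "1/2 < a" and "a < 5/2"
  shows "ball (complex_of_real a) (r_a a) \<subseteq> Omega_car \<and>
         Omega_car \<subseteq> ball (complex_of_real a) (R_a a)"
proof -
  define c where "c = 2 * a - 1"
  have c_pos: "0 < c" and c_less: "c < 4" using assms by (simp_all add: c_def)
  have centre: "(1 + c) / 2 = a" by (simp add: c_def)
  have inner_radius: "min c (4 - c) / 2 = r_a a" by (auto simp: c_def r_a_def)
  have outer_radius: "sqrt (car_profile_max c) / 2 = R_a a"
  proof (cases "a \<le> 7/6")
    case True
    then show ?thesis by (simp add: c_def car_profile_max_def R_a_def)
  next
    case False
    have "\<not> c \<le> 4/3" and "(c - 1) * 4 = 8 * (a - 1)" using False by (simp_all add: c_def)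
    then have "car_profile_max c / 4 = (2*a - 1)^3 / (8*(a - 1))"
      by (simp add: car_profile_max_def c_def divide_divide_eq_left)
    moreover have "sqrt (car_profile_max c) / 2 = sqrt (car_profile_max c / 4)"
      by (simp add: real_sqrt_divide)
    ultimately show ?thesis using False by (simp only: R_a_def if_False)
  qed
  show ?thesis
    using ball_subset_Omega_car[OF c_pos c_less] Omega_car_subset_ball[OF c_pos]
    unfolding centre inner_radius outer_radius ..
qed

end
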